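(* Let $K$ be a number field, $f$ a monic family homogeneous of degree $d$ and weight $e$, and let $\mathfrak{a},\mathfrak{b}$ be $M_K$-constants as in the following property: for all $v\in M_K$ and $t,z\in K$ with $\log|z|_v>\frac1e\log^+|t|_v+\mathfrak a_v$ one has $|f_t(z)|_v\ge|z|_v$ and $|G_{f_t,v}(z)-\log|z|_v|\le\mathfrak b_v$ (such constants exist, with $\mathfrak b_v=0$ at non-archimedean $v$). Then for any $v\in M_K$, any $t\in K$ with $|t|_v\leq 1$, and any two distinct $x, y\in K$, \[g_{f_t, v}(x, y)\geq -\max\{\mathfrak{a}_v, \mathfrak{b}_v\}-\log 2_v.\]
   Context: $M_K$: places of $K$, absolute values extending standard ones on $\mathbb{Q}$. An $M_K$-constant is a real function on $M_K$ vanishing at all but finitely many places. For $r>0$, $r_v=r$ if $v$ is archimedean and $r_v=1$ otherwise. $\log^+X=\log\max\{1,X\}$. Monic family homogeneous of degree $d$ and weight $e\ge 2$: $f_t(z)=\prod_{i=1}^{d/e}(z^e-\beta_i t)$ with fixed nonzero $\beta_i\in K$. $G_{g,v}(P)=\lim_{n\to\infty}d^{-n}\log^+|g^n(P)|_v$, and $g_{g,v}(x,y)=-\log|x-y|_v+G_{g,v}(x)+G_{g,v}(y)$ for $x\ne y$. *)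

theory Defs
  imports "HOL-Analysis.Analysis" "HOL-Computational_Algebra.Computational_Algebra"
begin

definition number_field_type :: "'k::field_char_0 itself \<Rightarrow> bool" where
  "number_field_type _ \<longleftrightarrow>
     (\<exists>B :: 'k set. finite B \<and> (\<forall>x::'k. \<exists>c. x = (\<Sum>b\<in>B. of_rat (c b) * b)))"

definition is_abs_val :: "('k::field \<Rightarrow> real) \<Rightarrow> bool" where
  "is_abs_val v \<longleftrightarrow> v 0 = 0 \<and> (\<forall>x. x \<noteq> 0 \<longrightarrow> v x > 0)
     \<and> (\<forall>x y. v (x * y) = v x * v y) \<and> (\<forall>x y. v (x + y) \<le> v x + v y)"

definition padic_abs :: "nat \<Rightarrow> rat \<Rightarrow> real" where
  "padic_abs p q = (if q = 0 then 0 else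
     (let (a, b) = quotient_of q in
        real p powr (real (multiplicity (int p) b) - real (multiplicity (int p) a))))"

definition archimedean_place :: "('k::field_char_0 \<Rightarrow> real) \<Rightarrow> bool" where
  "archimedean_place v \<longleftrightarrow> (\<forall>q::rat. v (of_rat q) = \<bar>real_of_rat q\<bar>)"

definition places :: "('k::field_char_0 \<Rightarrow> real) set" where
  "places = {v. is_abs_val v \<and>
     (archimedean_place v \<or> (\<exists>p. prime p \<and> (\<forall>q::rat. v (of_rat q) = padic_abs p q)))}"

definition MK_constant :: "(('k::field_char_0 \<Rightarrow> real) \<Rightarrow> real) \<Rightarrow> bool" where
  "MK_constant c \<longleftrightarrow> finite {v \<in> (places :: ('k \<Rightarrow> real) set). c v \<noteq> 0}"

text \<open>r_v = r at archimedean places, 1 otherwise.\<close>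
definition at_place :: "real \<Rightarrow> ('k::field_char_0 \<Rightarrow> real) \<Rightarrow> real" where
  "at_place r v = (if archimedean_place v then r else 1)"

definition logplus :: "real \<Rightarrow> real" where
  "logplus x = ln (max 1 x)"

definition monic_family :: "nat \<Rightarrow> nat \<Rightarrow> (nat \<Rightarrow> 'k::field) \<Rightarrow> 'k \<Rightarrow> 'k \<Rightarrow> 'k" where
  "monic_family d e \<beta> t z = (\<Prod>i\<in>{1..d div e}. (z ^ e - \<beta> i * t))"

definition G_esc :: "nat \<Rightarrow> ('k \<Rightarrow> 'k) \<Rightarrow> ('k \<Rightarrow> real) \<Rightarrow> 'k \<Rightarrow> real" where
  "G_esc d g v P = lim (\<lambda>n. logplus (v ((g ^^ n) P)) / real d ^ n)"

definition g_green :: "nat \<Rightarrow> ('k::field \<Rightarrow> 'k) \<Rightarrow> ('k \<Rightarrow> real) \<Rightarrow> 'k \<Rightarrow> 'k \<Rightarrow> real" where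
  "g_green d g v x y = - ln (v (x - y)) + G_esc d g v x + G_esc d g v y"

end

theory Submission
  imports Defs
begin

text \<open>The orbit of a point under a map of degree \<open>d \<ge> 2\<close> either stays bounded, so its escape
  rate is \<open>0\<close>, or it eventually enters the region where \<open>|f z|\<close> is comparable to \<open>|z|\<^sup>d\<close>, and then
  \<open>d\<^sup>-\<^sup>n log |f\<^sup>n z|\<close> converges geometrically. Either way \<open>G\<close> is a genuine limit of nonnegative
  numbers, hence nonnegative. Now take \<open>|y| \<le> |x|\<close>. The (ultra)metric triangle inequality gives
  \<open>log |x - y| \<le> log 2\<^sub>v + log |x|\<close>, and \<open>G(x) \<ge> log |x| - max a\<^sub>v b\<^sub>v\<close>: for \<open>log |x| > a\<^sub>v\<close> by the
  defining property of \<open>b\<close> (recall \<open>|t| \<le> 1\<close>), otherwise from \<open>G(x) \<ge> 0\<close>. Adding \<open>G(y) \<ge> 0\<close> gives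
  the bound.\<close>

lemma abs_val_zero: "is_abs_val v \<Longrightarrow> v 0 = 0"
  unfolding is_abs_val_def by auto

lemma abs_val_pos: "is_abs_val v \<Longrightarrow> x \<noteq> 0 \<Longrightarrow> v x > 0"
  unfolding is_abs_val_def by auto

lemma abs_val_nonneg: "is_abs_val v \<Longrightarrow> v x \<ge> 0"
  unfolding is_abs_val_def by (cases "x = 0") (auto simp: less_imp_le)

lemma abs_val_mult: "is_abs_val v \<Longrightarrow> v (x * y) = v x * v y"
  unfolding is_abs_val_def by auto

lemma abs_val_triangle: "is_abs_val v \<Longrightarrow> v (x + y) \<le> v x + v y"
  unfolding is_abs_val_def by auto

lemma abs_val_one: "is_abs_val v \<Longrightarrow> v (1::'k::field) = 1"
  using abs_val_mult[of v 1 1] abs_val_pos[of v 1] by force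

lemma abs_val_minus:
  assumes v: "is_abs_val v"
  shows "v (- (x::'k::field)) = v x"
proof -
  have "v (-1::'k) ^ 2 = 1"
    using abs_val_mult[OF v, of "-1::'k" "-1"] abs_val_one[OF v] by (simp add: power2_eq_square)
  then have "v (-1::'k) = 1"
    using abs_val_nonneg[OF v, of "-1::'k"] by (simp add: power2_eq_1_iff)
  then show ?thesis using abs_val_mult[OF v, of "-1" x] by simp
qed

lemma abs_val_minus_commute: "is_abs_val v \<Longrightarrow> v ((x::'k::field) - y) = v (y - x)"
  by (metis abs_val_minus minus_diff_eq)

lemma abs_val_diff_ge: "is_abs_val v \<Longrightarrow> v ((x::'k::field) - y) \<ge> v x - v y"
  using abs_val_triangle[of v "x - y" y] by simp

lemma abs_val_diff_le: "is_abs_val v \<Longrightarrow> v ((x::'k::field) - y) \<le> v x + v y"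
  using abs_val_triangle[of v x "- y"] abs_val_minus[of v y] by simp

lemma abs_val_power: "is_abs_val v \<Longrightarrow> v ((x::'k::field) ^ n) = v x ^ n"
  by (induction n) (auto simp: abs_val_one abs_val_mult)

lemma abs_val_prod: "is_abs_val v \<Longrightarrow> v (\<Prod>i\<in>A. (g i::'k::field)) = (\<Prod>i\<in>A. v (g i))"
  by (induction A rule: infinite_finite_induct) (auto simp: abs_val_one abs_val_mult)

lemma abs_val_sum: "is_abs_val v \<Longrightarrow> v (\<Sum>i\<in>A. (g i::'k::field)) \<le> (\<Sum>i\<in>A. v (g i))"
proof (induction A rule: infinite_finite_induct)
  case (insert x F)
  then show ?case using abs_val_triangle[OF insert.prems, of "g x" "sum g F"] by simp
qed (auto simp: abs_val_zero)

lemma abs_val_add_power_le: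
  fixes x y :: "'k::field"
  assumes v: "is_abs_val v" and nat_le_1: "\<And>n. v (of_nat n :: 'k) \<le> 1"
  shows "v (x + y) ^ n \<le> (real n + 1) * max (v x) (v y) ^ n"
proof -
  let ?M = "max (v x) (v y)"
  have "v (x + y) ^ n = v (\<Sum>k\<le>n. of_nat (n choose k) * x ^ k * y ^ (n - k))"
    by (simp only: abs_val_power[OF v, symmetric] binomial_ring)
  also have "\<dots> \<le> (\<Sum>k\<le>n. v (of_nat (n choose k) * x ^ k * y ^ (n - k)))"
    by (rule abs_val_sum[OF v])
  also have "\<dots> \<le> (\<Sum>k\<le>n. ?M ^ n)"
  proof (rule sum_mono)
    fix k assume "k \<in> {..n}"
    have "v (of_nat (n choose k) * x ^ k * y ^ (n - k))
          = v (of_nat (n choose k)) * v x ^ k * v y ^ (n - k)"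
      by (simp add: abs_val_mult[OF v] abs_val_power[OF v])
    also have "\<dots> \<le> 1 * ?M ^ k * ?M ^ (n - k)"
      by (intro mult_mono power_mono) (use nat_le_1 abs_val_nonneg[OF v] in \<open>auto intro!: zero_le_power simp: le_max_iff_disj\<close>)
    also have "\<dots> = ?M ^ n" using \<open>k \<in> {..n}\<close> by (simp add: power_add[symmetric])
    finally show "v (of_nat (n choose k) * x ^ k * y ^ (n - k)) \<le> ?M ^ n" .
  qed
  finally show ?thesis by (simp add: algebra_simps)
qed

lemma le_1_if_power_le_linear:
  fixes r :: real
  assumes "r \<ge> 0" and power_le: "\<And>n. n \<ge> 1 \<Longrightarrow> r ^ n \<le> real n + 1"
  shows "r \<le> 1"
proof -
  have lim: "(\<lambda>n. root n 2 * root n (real n)) \<longlonglongrightarrow> 1"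
    using tendsto_mult[OF LIMSEQ_root_const LIMSEQ_root, of 2] by simp
  show ?thesis
  proof (rule LIMSEQ_le_const[OF lim], intro exI allI impI)
    fix n :: nat assume "n \<ge> 1"
    have "r = root n (r ^ n)" using real_root_power_cancel \<open>r \<ge> 0\<close> \<open>n \<ge> 1\<close> by simp
    also have "\<dots> \<le> root n (2 * real n)" using power_le[OF \<open>n \<ge> 1\<close>] \<open>n \<ge> 1\<close> by simp
    also have "\<dots> = root n 2 * root n (real n)" by (simp add: real_root_mult)
    finally show "r \<le> root n 2 * root n (real n)" .
  qed
qed

text \<open>Artin's criterion: an absolute value bounded on the integers is non-archimedean.\<close>

lemma abs_val_ultrametric:
  fixes x y :: "'k::field"
  assumes v: "is_abs_val v" and nat_le_1: "\<And>n. v (of_nat n :: 'k) \<le> 1"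
  shows "v (x + y) \<le> max (v x) (v y)"
proof (cases "max (v x) (v y) = 0")
  case True
  then have "x = 0" "y = 0" using abs_val_pos[OF v] by (metis max.cobounded1 max.cobounded2 not_le)+
  then show ?thesis using abs_val_zero[OF v] by simp
next
  case False
  then have M: "max (v x) (v y) > 0" using abs_val_nonneg[OF v, of x] by linarith
  have "v (x + y) / max (v x) (v y) \<le> 1"
  proof (rule le_1_if_power_le_linear)
    show "v (x + y) / max (v x) (v y) \<ge> 0" using abs_val_nonneg[OF v] M by simp
    show "(v (x + y) / max (v x) (v y)) ^ n \<le> real n + 1" for n
      using abs_val_add_power_le[OF v nat_le_1, of x y n] M
      by (simp add: power_divide divide_le_eq)
  qed
  then show ?thesis using M by (simp add: divide_le_eq)
qed

lemma padic_abs_of_nat_le_1: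
  assumes "prime (p::nat)"
  shows "padic_abs p (of_nat n) \<le> 1"
proof (cases "n = 0")
  case False
  have "quotient_of (of_nat n :: rat) = (int n, 1)"
    using quotient_of_int[of "int n"] by simp
  then have "padic_abs p (of_nat n) = inverse (real p powr real (multiplicity (int p) (int n)))"
    using False unfolding padic_abs_def by (simp add: powr_minus)
  moreover have "1 \<le> real p powr real (multiplicity (int p) (int n))"
    using prime_gt_1_nat[OF assms] by (intro ge_one_powr_ge_zero) auto
  ultimately show ?thesis by (simp add: inverse_le_1_iff)
qed (simp add: padic_abs_def)

lemma places_abs_val: "v \<in> places \<Longrightarrow> is_abs_val v"
  unfolding places_def by auto

lemma places_diff_le:
  fixes x y :: "'k::field_char_0"
  assumes "v \<in> places"
  shows "v (x - y) \<le> at_place 2 v * max (v x) (v y)"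
proof (cases "archimedean_place v")
  case True
  then show ?thesis
    using abs_val_diff_le[OF places_abs_val[OF assms], of x y] unfolding at_place_def
    by (simp add: max_def)
next
  case False
  have v: "is_abs_val v" using places_abs_val[OF assms] .
  from False obtain p where "prime p" and p_adic: "\<forall>q::rat. v (of_rat q) = padic_abs p q"
    using assms unfolding places_def by auto
  have "v (of_nat n :: 'k) = padic_abs p (of_nat n)" for n
    using p_adic[rule_format, of "of_nat n"] by simp
  then have "v (x + - y) \<le> max (v x) (v (- y))"
    using abs_val_ultrametric[OF v] padic_abs_of_nat_le_1[OF \<open>prime p\<close>] by metis
  then show ?thesis using False abs_val_minus[OF v, of y] unfolding at_place_def by simp
qed

lemma convergent_if_diff_le_geometric:
  fixes u :: "nat \<Rightarrow> real"
  assumes "\<bar>q\<bar> < 1" and diff_le: "\<And>n. \<bar>u (Suc n) - u n\<bar> \<le> C * q ^ n"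
  shows "convergent u"
proof -
  have "summable (\<lambda>n. C * q ^ n)"
    using assms(1) by (intro summable_mult summable_geometric) simp
  then have "summable (\<lambda>n. u (Suc n) - u n)"
    by (rule summable_comparison_test[rotated]) (use diff_le in simp)
  then have "convergent (\<lambda>n. u 0 + (\<Sum>k<n. u (Suc k) - u k))"
    by (intro convergent_add convergent_const) (simp add: summable_iff_convergent)
  then show ?thesis by (simp add: sum_lessThan_telescope)
qed

lemma ln_growth_le:
  assumes "0 < w" "1 \<le> K" "w' \<le> K * w ^ d" "w ^ d / K \<le> w'"
  shows "\<bar>ln w' - real d * ln w\<bar> \<le> ln K"
proof -
  have "w' > 0" using assms by (smt (verit) divide_pos_pos zero_less_power)
  then have "ln (w ^ d / K) \<le> ln w'" "ln w' \<le> ln (K * w ^ d)"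
    using assms by (subst ln_le_cancel_iff; simp)+
  then show ?thesis using assms by (simp add: ln_div ln_mult ln_realpow)
qed

lemma escape_rate_convergent:
  fixes v :: "'a \<Rightarrow> real" and f :: "'a \<Rightarrow> 'a"
  assumes d: "d \<ge> 2" and "R \<ge> 1" and K: "K \<ge> 1"
    and growth: "\<And>z. v z \<ge> R \<Longrightarrow> v z ^ d / K \<le> v (f z) \<and> v (f z) \<le> K * v z ^ d"
  shows "convergent (\<lambda>n. logplus (v ((f ^^ n) P)) / real d ^ n)"
proof -
  define R' where "R' = max R K"
  have R': "R' \<ge> 1" "R' \<ge> R" "R' \<ge> K" using \<open>R \<ge> 1\<close> unfolding R'_def by auto
  have escape: "v (f z) \<ge> R'" if "v z \<ge> R'" for z
  proof -
    have "R' * K \<le> v z ^ 2"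
      unfolding power2_eq_square using that R' K by (intro mult_mono) auto
    also have "\<dots> \<le> v z ^ d" using that R' d by (intro power_increasing) auto
    finally have "R' \<le> v z ^ d / K" using K by (simp add: le_divide_eq)
    then show ?thesis using growth[of z] that R'(2) by force
  qed
  show ?thesis
  proof (cases "\<forall>n. v ((f ^^ n) P) < R'")
    case True
    have "(\<lambda>n. logplus (v ((f ^^ n) P)) / real d ^ n) \<longlonglongrightarrow> 0"
    proof (rule tendsto_sandwich[of "\<lambda>n. 0" _ _ "\<lambda>n. ln R' / real d ^ n"])
      have "logplus (v ((f ^^ n) P)) \<le> ln R'" for n
        unfolding logplus_def using True[rule_format, of n] R' by simp
      then show "\<forall>\<^sub>F n in sequentially. logplus (v ((f ^^ n) P)) / real d ^ n \<le> ln R' / real d ^ n"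
        by (simp add: divide_right_mono)
      show "(\<lambda>n. ln R' / real d ^ n) \<longlonglongrightarrow> 0"
        using d by (intro LIMSEQ_divide_realpow_zero) auto
    qed (auto simp: logplus_def)
    then show ?thesis by (rule convergentI)
  next
    case False
    then obtain N where N: "v ((f ^^ N) P) \<ge> R'" by (auto simp: not_less)
    define z where "z n = (f ^^ (n + N)) P" for n
    have z_Suc: "z (Suc n) = f (z n)" for n unfolding z_def by simp
    have z_large: "v (z n) \<ge> R'" for n
      by (induction n) (use N escape in \<open>auto simp: z_def z_Suc\<close>)
    define u where "u n = ln (v (z n)) / real d ^ (n + N)" for n
    have u_diff: "\<bar>u (Suc n) - u n\<bar> \<le> (ln K / real d ^ Suc N) * (1 / real d) ^ n" for n
    proof -
      have "\<bar>u (Suc n) - u n\<bar> = \<bar>ln (v (z (Suc n))) - real d * ln (v (z n))\<bar> / real d ^ (Suc n + N)"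
        unfolding u_def using d by (simp add: field_simps)
      also have "\<dots> \<le> ln K / real d ^ (Suc n + N)"
        using growth[of "z n"] z_large[of n] R' K
        by (intro divide_right_mono ln_growth_le) (auto simp: z_Suc)
      also have "\<dots> = (ln K / real d ^ Suc N) * (1 / real d) ^ n"
        by (simp add: power_add power_one_over)
      finally show ?thesis .
    qed
    have "convergent u"
      by (rule convergent_if_diff_le_geometric[OF _ u_diff]) (use d in simp)
    then obtain L where "u \<longlonglongrightarrow> L" by (auto simp: convergent_def)
    moreover have "u = (\<lambda>n. logplus (v ((f ^^ (n + N)) P)) / real d ^ (n + N))"
    proof (rule ext)
      fix n
      have "max 1 (v (z n)) = v (z n)" using z_large[of n] R' by simp
      then show "u n = logplus (v ((f ^^ (n + N)) P)) / real d ^ (n + N)"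
        unfolding u_def logplus_def z_def by simp
    qed
    ultimately have "(\<lambda>n. logplus (v ((f ^^ (n + N)) P)) / real d ^ (n + N)) \<longlonglongrightarrow> L"
      by simp
    then show ?thesis by (rule convergentI[OF LIMSEQ_offset])
  qed
qed

lemma G_esc_nonneg:
  assumes "convergent (\<lambda>n. logplus (v ((f ^^ n) P)) / real d ^ n)"
  shows "G_esc d f v P \<ge> 0"
  unfolding G_esc_def
  by (rule LIMSEQ_le_const[OF assms[unfolded convergent_LIMSEQ_iff]]) (auto simp: logplus_def)

lemma monic_family_growth:
  fixes \<beta> :: "nat \<Rightarrow> 'k::field" and t :: 'k
  assumes v: "is_abs_val v" and "e > 0" and "e dvd d"
  obtains R K where "R \<ge> 1" "K \<ge> 1"
    "\<And>z. v z \<ge> R \<Longrightarrow>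
       v z ^ d / K \<le> v (monic_family d e \<beta> t z) \<and> v (monic_family d e \<beta> t z) \<le> K * v z ^ d"
proof -
  define m where "m = d div e"
  define B where "B = (\<Sum>i\<in>{1..m}. v (\<beta> i * t))"
  define K :: real where "K = 2 ^ m"
  define R where "R = max 1 (2 * B)"
  have "R \<ge> 1" "K \<ge> 1" unfolding R_def K_def by auto
  have B: "v (\<beta> i * t) \<le> B" if "i \<in> {1..m}" for i
    unfolding B_def using that abs_val_nonneg[OF v] by (intro member_le_sum) auto
  have "v z ^ d / K \<le> v (monic_family d e \<beta> t z) \<and> v (monic_family d e \<beta> t z) \<le> K * v z ^ d"
    if "v z \<ge> R" for z
  proof -
    define Z where "Z = v z ^ e"
    have "v z \<le> Z" unfolding Z_def using that \<open>e > 0\<close> R_def by (intro self_le_power) auto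
    have factor: "Z / 2 \<le> v (z ^ e - \<beta> i * t) \<and> v (z ^ e - \<beta> i * t) \<le> 2 * Z"
      if "i \<in> {1..m}" for i
    proof -
      have "v (\<beta> i * t) \<le> Z / 2" using B[OF that] \<open>v z \<ge> R\<close> \<open>v z \<le> Z\<close> R_def by simp
      moreover have "v (z ^ e) = Z" unfolding Z_def by (rule abs_val_power[OF v])
      ultimately show ?thesis
        using abs_val_diff_ge[OF v, of "z ^ e" "\<beta> i * t"] abs_val_diff_le[OF v, of "z ^ e" "\<beta> i * t"]
          abs_val_nonneg[OF v, of "\<beta> i * t"] by linarith
    qed
    have f: "v (monic_family d e \<beta> t z) = (\<Prod>i\<in>{1..m}. v (z ^ e - \<beta> i * t))"
      unfolding monic_family_def m_def[symmetric] by (rule abs_val_prod[OF v])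
    have "Z \<ge> 0" using \<open>v z \<le> Z\<close> \<open>v z \<ge> R\<close> \<open>R \<ge> 1\<close> by simp
    have "(\<Prod>i\<in>{1..m}. Z / 2) \<le> v (monic_family d e \<beta> t z)"
      unfolding f by (rule prod_mono) (use factor \<open>Z \<ge> 0\<close> in auto)
    moreover have "v (monic_family d e \<beta> t z) \<le> (\<Prod>i\<in>{1..m}. 2 * Z)"
      unfolding f by (rule prod_mono) (use factor abs_val_nonneg[OF v] in auto)
    moreover have "Z ^ m = v z ^ d" unfolding Z_def m_def using \<open>e dvd d\<close> by (simp add: power_mult[symmetric])
    ultimately show ?thesis unfolding K_def by (simp add: power_divide power_mult_distrib)
  qed
  with \<open>R \<ge> 1\<close> \<open>K \<ge> 1\<close> show ?thesis using that by blast
qed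

lemma g_green_commute:
  "is_abs_val v \<Longrightarrow> g_green d f v x y = g_green d f v y (x::'k::field)"
  unfolding g_green_def by (simp add: abs_val_minus_commute)

lemma g_green_lower_bound:
  fixes x y :: "'k::field_char_0"
  assumes v: "v \<in> places" and "x \<noteq> y" and le: "v y \<le> v x"
    and "G_esc d f v y \<ge> 0" and "x \<noteq> 0 \<Longrightarrow> G_esc d f v x \<ge> ln (v x) - c"
  shows "g_green d f v x y \<ge> - c - ln (at_place 2 v)"
proof -
  have av: "is_abs_val v" using places_abs_val[OF v] .
  have "x \<noteq> 0" using le \<open>x \<noteq> y\<close> abs_val_pos[OF av, of y] abs_val_zero[OF av] by force
  then have "v x > 0" "v (x - y) > 0" using abs_val_pos[OF av] \<open>x \<noteq> y\<close> by auto
  have "at_place 2 v > 0" unfolding at_place_def by simp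
  have "v (x - y) \<le> at_place 2 v * v x" using places_diff_le[OF v, of x y] le by simp
  then have "ln (v (x - y)) \<le> ln (at_place 2 v * v x)"
    using \<open>v x > 0\<close> \<open>v (x - y) > 0\<close> \<open>at_place 2 v > 0\<close> by simp
  also have "\<dots> = ln (at_place 2 v) + ln (v x)"
    using \<open>v x > 0\<close> \<open>at_place 2 v > 0\<close> by (simp add: ln_mult)
  finally show ?thesis unfolding g_green_def using assms(4,5) \<open>x \<noteq> 0\<close> by linarith
qed

theorem lemma2p2:
  fixes d e :: nat and \<beta> :: "nat \<Rightarrow> 'k::field_char_0"
    and a b :: "('k \<Rightarrow> real) \<Rightarrow> real"
  assumes K: "number_field_type TYPE('k)"
    and e2: "e \<ge> 2" and edvd: "e dvd d" and dpos: "d > 0"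
    and \<beta>nz: "\<forall>i\<in>{1..d div e}. \<beta> i \<noteq> 0"
    and a_const: "MK_constant a" and b_const: "MK_constant b"
    and ab_prop: "\<forall>v\<in>places. \<forall>t z :: 'k. z \<noteq> 0 \<longrightarrow>
        ln (v z) > logplus (v t) / real e + a v \<longrightarrow>
          v (monic_family d e \<beta> t z) \<ge> v z \<and>
          \<bar>G_esc d (monic_family d e \<beta> t) v z - ln (v z)\<bar> \<le> b v"
    and v: "v \<in> places" and t: "v t \<le> 1" and xy: "x \<noteq> y"
  shows "g_green d (monic_family d e \<beta> t) v x y \<ge> - max (a v) (b v) - ln (at_place 2 v)"
proof -
  let ?f = "monic_family d e \<beta> t"
  have av: "is_abs_val v" using places_abs_val[OF v] .
  have "e > 0" "d \<ge> 2" using e2 dvd_imp_le[OF edvd dpos] by auto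
  obtain R C where "R \<ge> 1" "C \<ge> 1" and growth:
    "\<And>z. v z \<ge> R \<Longrightarrow> v z ^ d / C \<le> v (?f z) \<and> v (?f z) \<le> C * v z ^ d"
    using monic_family_growth[OF av \<open>e > 0\<close> edvd, of \<beta> t] by blast
  have G_nonneg: "G_esc d ?f v w \<ge> 0" for w
    by (intro G_esc_nonneg escape_rate_convergent[where f = ?f and v = v,
          OF \<open>d \<ge> 2\<close> \<open>R \<ge> 1\<close> \<open>C \<ge> 1\<close> growth])
  have "logplus (v t) = 0" unfolding logplus_def using t by simp
  have G_ge: "G_esc d ?f v w \<ge> ln (v w) - max (a v) (b v)" if "w \<noteq> 0" for w
  proof (cases "ln (v w) > a v")
    case True
    then have "\<bar>G_esc d ?f v w - ln (v w)\<bar> \<le> b v"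
      using ab_prop v that \<open>logplus (v t) = 0\<close> by simp
    then show ?thesis using max.cobounded2[of "b v" "a v"] by linarith
  next
    case False
    then show ?thesis using G_nonneg[of w] max.cobounded1[of "a v" "b v"] by linarith
  qed
  show ?thesis
  proof (cases "v y \<le> v x")
    case True
    show ?thesis by (rule g_green_lower_bound[OF v xy True G_nonneg G_ge])
  next
    case False
    have "g_green d ?f v y x \<ge> - max (a v) (b v) - ln (at_place 2 v)"
      using False xy by (intro g_green_lower_bound[OF v _ _ G_nonneg G_ge]) auto
    then show ?thesis by (simp add: g_green_commute[OF av])
  qed
qed

end
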